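(* Let $t$ be an illegal signed batch tag posted in L1 and not yet confirmed, and let $A$ be an honest agent that knows all transactions of $t$ and all transactions in already confirmed batches. Then $A$ can prevent the confirmation of $t$ (by winning the appropriate signature, validity, or integrity challenge, causing $t$ to be discarded).
   Context: Setting: L2 blockchain with an arranger of server processes, at most an unbounded number of which may be Byzantine; $f$ is the fault parameter of the arranger. A signed batch tag $t=(\mathit{batchId},h,\sigma)$ posted in L1 consists of a batch identifier, the Merkle root hash $h$ of a batch $b$ of transactions, and a combined signature $\sigma$; stakers stake on $t$, and $t$ is confirmed after a delay unless discarded by a challenge. $t$ is legal iff: (B1) $\sigma$ contains at least $f+1$ valid arranger process signatures; (B2) $b$ contains only valid transactions; (B3) no transaction in $b$ is duplicated; (B4) no transaction in $b$ appears in a previously confirmed batch; illegal otherwise. Challenges (L1 contracts): Signature challenge (B1): L1 contracts check the number of signers and verify the aggregate signature; if incorrect, $t$ is discarded and all stakers lose their stakes. Validity challenge (B2): challenger presents an invalid transaction $e$, its hash $h_e$, its position, and the hash of the middle node of the Merkle path from the leaf to the root; the contract checks invalidity of $e$ and that $e$ hashes to $h_e$; then a bisection game over the path: the staker selects a subpath to challenge, the challenger provides the middle node hash if the subpath has more than two nodes; when the subpath has two nodes with parent hash $h_p$ and child hash $h_c$, the challenger must post $h$ such that hashing the concatenation of $h$ and $h_c$ gives $h_p$; if so the challenger wins and the staker loses its stake. Integrity challenge 1 (B3): same, with the challenger supplying two Merkle paths in $t$ with leaf $e$. Integrity challenge 2 (B4): same, with one path in $t$ and one path in a previously confirmed tag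 $t'$ with leaf $e$. Hashes are assumed collision resistant. *)

theory Defs
  imports Main
begin

text \<open>A batch of transactions is represented by its Merkle tree.
  A position of a leaf is the list of directions from the root to the leaf
  (False = left child, True = right child).\<close>

datatype 'tx mtree = MLeaf 'tx | MNode "'tx mtree" "'tx mtree"

text \<open>Merkle root: leafH hashes a transaction, nodeH l r is the hash of the
  concatenation of l and r.\<close>
fun mroot :: "('tx \<Rightarrow> 'h) \<Rightarrow> ('h \<Rightarrow> 'h \<Rightarrow> 'h) \<Rightarrow> 'tx mtree \<Rightarrow> 'h" where
  "mroot leafH nodeH (MLeaf x) = leafH x"
| "mroot leafH nodeH (MNode l r) = nodeH (mroot leafH nodeH l) (mroot leafH nodeH r)"

fun leaf_at :: "'tx mtree \<Rightarrow> bool list \<Rightarrow> 'tx option" where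
  "leaf_at (MLeaf x) [] = Some x"
| "leaf_at (MNode l r) (False # p) = leaf_at l p"
| "leaf_at (MNode l r) (True # p) = leaf_at r p"
| "leaf_at _ _ = None"

definition txs :: "'tx mtree \<Rightarrow> 'tx set" where
  "txs b = {x. \<exists>p. leaf_at b p = Some x}"

record ('bid, 'h, 'p, 's) tag =
  batchId :: 'bid
  root :: 'h
  sig :: "('p \<times> 's) list"

text \<open>Valid arranger-process signatures contained in sigma (P = arranger processes,
  verify p m s = s is a valid signature of process p on message m).\<close>
definition valid_signers ::
  "('p \<Rightarrow> 'bid \<times> 'h \<Rightarrow> 's \<Rightarrow> bool) \<Rightarrow> 'p set \<Rightarrow> ('bid, 'h, 'p, 's) tag \<Rightarrow> 'p set" where
  "valid_signers verify P t =
     {p \<in> P. \<exists>s. (p, s) \<in> set (sig t) \<and> verify p (batchId t, root t) s}"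

definition B1 :: "('p \<Rightarrow> 'bid \<times> 'h \<Rightarrow> 's \<Rightarrow> bool) \<Rightarrow> 'p set \<Rightarrow> nat \<Rightarrow> ('bid, 'h, 'p, 's) tag \<Rightarrow> bool" where
  "B1 verify P f t \<longleftrightarrow> f + 1 \<le> card (valid_signers verify P t)"

definition B2 :: "('tx \<Rightarrow> bool) \<Rightarrow> 'tx mtree \<Rightarrow> bool" where
  "B2 valid b \<longleftrightarrow> (\<forall>x \<in> txs b. valid x)"

definition B3 :: "'tx mtree \<Rightarrow> bool" where
  "B3 b \<longleftrightarrow> \<not> (\<exists>p q x. p \<noteq> q \<and> leaf_at b p = Some x \<and> leaf_at b q = Some x)"

text \<open>confd: the previously confirmed tags together with their batches.\<close>
definition B4 :: "'tx mtree \<Rightarrow> (('bid, 'h, 'p, 's) tag \<times> 'tx mtree) list \<Rightarrow> bool" where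
  "B4 b confd \<longleftrightarrow> (\<forall>x \<in> txs b. \<forall>(t', b') \<in> set confd. x \<notin> txs b')"

definition legal ::
  "('p \<Rightarrow> 'bid \<times> 'h \<Rightarrow> 's \<Rightarrow> bool) \<Rightarrow> 'p set \<Rightarrow> nat \<Rightarrow> ('tx \<Rightarrow> bool)
   \<Rightarrow> ('bid, 'h, 'p, 's) tag \<Rightarrow> 'tx mtree \<Rightarrow> (('bid, 'h, 'p, 's) tag \<times> 'tx mtree) list \<Rightarrow> bool" where
  "legal verify P f valid t b confd \<longleftrightarrow> B1 verify P f t \<and> B2 valid b \<and> B3 b \<and> B4 b confd"

text \<open>The path from the leaf (level 0) to the root (level n = length pos) consists of
  the hashes at levels 0..n. Endpoints are fixed by the contract: level 0 is the
  leaf hash he, level n is the root hr. The challenger's claims for intermediate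
  levels are given by cl, and the sibling hash it posts at the final step
  (subpath from level i to level i+1) by sib i.
  The staker's strategy st lo hi decides, on subpath [lo,hi], whether to challenge
  the lower half [lo,mid] (True) or the upper half [mid,hi] (False).\<close>

definition pathval :: "'h \<Rightarrow> 'h \<Rightarrow> nat \<Rightarrow> (nat \<Rightarrow> 'h) \<Rightarrow> nat \<Rightarrow> 'h" where
  "pathval he hr n cl i = (if i = 0 then he else if i = n then hr else cl i)"

function bisect_end :: "(nat \<Rightarrow> nat \<Rightarrow> bool) \<Rightarrow> nat \<Rightarrow> nat \<Rightarrow> nat \<times> nat" where
  "bisect_end st lo hi =
     (if hi \<le> Suc lo then (lo, hi)
      else if st lo hi then bisect_end st lo ((lo + hi) div 2)
      else bisect_end st ((lo + hi) div 2) hi)"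
  by pat_completeness auto
termination
  by (relation "measure (\<lambda>(st, lo, hi). hi - lo)") auto

text \<open>Degenerate case of a path with a single node (batch of one transaction): the leaf
  hash must equal the root.\<close>
definition final_ok ::
  "('h \<Rightarrow> 'h \<Rightarrow> 'h) \<Rightarrow> 'h \<Rightarrow> 'h \<Rightarrow> bool list \<Rightarrow> (nat \<Rightarrow> 'h) \<Rightarrow> (nat \<Rightarrow> 'h) \<Rightarrow> nat \<times> nat \<Rightarrow> bool" where
  "final_ok nodeH he hr pos cl sib ij =
     (let (i, j) = ij; n = length pos;
          hc = pathval he hr n cl i; hp = pathval he hr n cl j
      in if j = Suc i then
           (if pos ! (n - Suc i) then nodeH (sib i) hc = hp else nodeH hc (sib i) = hp)
         else he = hr)"

definition path_game_won ::
  "('h \<Rightarrow> 'h \<Rightarrow> 'h) \<Rightarrow> 'h \<Rightarrow> 'h \<Rightarrow> bool list \<Rightarrow> (nat \<Rightarrow> 'h) \<Rightarrow> (nat \<Rightarrow> 'h) \<Rightarrow> bool" where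
  "path_game_won nodeH hr he pos cl sib \<longleftrightarrow>
     (\<forall>st. final_ok nodeH he hr pos cl sib (bisect_end st 0 (length pos)))"

datatype ('tx, 'h, 'bid, 'p, 's) challenge =
    SigChallenge
  | ValidityChallenge 'tx 'h "bool list" "nat \<Rightarrow> 'h" "nat \<Rightarrow> 'h"
      \<comment> \<open>e, h_e, position, claimed path nodes, final sibling hashes\<close>
  | IntegrityChallenge1 'tx 'h "bool list" "nat \<Rightarrow> 'h" "nat \<Rightarrow> 'h"
                                "bool list" "nat \<Rightarrow> 'h" "nat \<Rightarrow> 'h"
      \<comment> \<open>two Merkle paths in t with leaf e\<close>
  | IntegrityChallenge2 'tx 'h "bool list" "nat \<Rightarrow> 'h" "nat \<Rightarrow> 'h"
                                "('bid, 'h, 'p, 's) tag" "bool list" "nat \<Rightarrow> 'h" "nat \<Rightarrow> 'h"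
      \<comment> \<open>one path in t and one path in a previously confirmed tag t' with leaf e\<close>

text \<open>Outcome of a challenge against tag t, as decided by the L1 contracts
  (conf = list of previously confirmed tags); True means the challenger wins
  and t is discarded.\<close>
fun challenge_wins ::
  "('p \<Rightarrow> 'bid \<times> 'h \<Rightarrow> 's \<Rightarrow> bool) \<Rightarrow> 'p set \<Rightarrow> nat \<Rightarrow> ('tx \<Rightarrow> bool)
   \<Rightarrow> ('tx \<Rightarrow> 'h) \<Rightarrow> ('h \<Rightarrow> 'h \<Rightarrow> 'h) \<Rightarrow> ('bid, 'h, 'p, 's) tag list
   \<Rightarrow> ('bid, 'h, 'p, 's) tag \<Rightarrow> ('tx, 'h, 'bid, 'p, 's) challenge \<Rightarrow> bool" where
  "challenge_wins verify P f valid leafH nodeH conf t SigChallenge =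
     (\<not> B1 verify P f t)"
| "challenge_wins verify P f valid leafH nodeH conf t (ValidityChallenge e he pos cl sib) =
     (\<not> valid e \<and> leafH e = he \<and> path_game_won nodeH (root t) he pos cl sib)"
| "challenge_wins verify P f valid leafH nodeH conf t
       (IntegrityChallenge1 e he pos1 cl1 sib1 pos2 cl2 sib2) =
     (leafH e = he \<and> pos1 \<noteq> pos2
      \<and> path_game_won nodeH (root t) he pos1 cl1 sib1
      \<and> path_game_won nodeH (root t) he pos2 cl2 sib2)"
| "challenge_wins verify P f valid leafH nodeH conf t
       (IntegrityChallenge2 e he pos1 cl1 sib1 t' pos2 cl2 sib2) =
     (leafH e = he \<and> t' \<in> set conf
      \<and> path_game_won nodeH (root t) he pos1 cl1 sib1
      \<and> path_game_won nodeH (root t') he pos2 cl2 sib2)"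

definition can_prevent_confirmation ::
  "('p \<Rightarrow> 'bid \<times> 'h \<Rightarrow> 's \<Rightarrow> bool) \<Rightarrow> 'p set \<Rightarrow> nat \<Rightarrow> ('tx \<Rightarrow> bool)
   \<Rightarrow> ('tx \<Rightarrow> 'h) \<Rightarrow> ('h \<Rightarrow> 'h \<Rightarrow> 'h) \<Rightarrow> ('bid, 'h, 'p, 's) tag list
   \<Rightarrow> ('bid, 'h, 'p, 's) tag \<Rightarrow> bool" where
  "can_prevent_confirmation verify P f valid leafH nodeH conf t \<longleftrightarrow>
     (\<exists>c. challenge_wins verify P f valid leafH nodeH conf t c)"

end

theory Submission
  imports Defs
begin

text \<open>An honest agent that knows the batch b of t wins every challenge it picks
  correctly: the challenge matching a violated condition (B1)--(B4) exhibits a leaf of b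
  (and possibly of a confirmed batch), and for any leaf the agent can post the true
  hashes of the Merkle path. Whatever subpath the staker chooses, the bisection ends on
  a parent/child pair of true node hashes, and the true sibling hash then satisfies the
  final check. No collision resistance is needed for the challenger to win; it is what
  makes the winning challenger's claims the only ones that can pass.\<close>

fun subtree :: "'tx mtree \<Rightarrow> bool list \<Rightarrow> 'tx mtree" where
  "subtree b [] = b"
| "subtree (MNode l r) (False # p) = subtree l p"
| "subtree (MNode l r) (True # p) = subtree r p"
| "subtree (MLeaf x) (_ # p) = MLeaf x"

lemma subtree_leaf_at: "leaf_at b p = Some x \<Longrightarrow> subtree b p = MLeaf x"
  by (induction b p rule: leaf_at.induct) auto

lemma subtree_prefix_of_leaf_path:
  "leaf_at b (p @ c # q) = Some x \<Longrightarrow>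
   subtree b p = MNode (subtree b (p @ [False])) (subtree b (p @ [True]))"
proof (induction p arbitrary: b)
  case Nil
  then show ?case by (cases b; cases c) auto
next
  case (Cons a p)
  then show ?case by (cases b; cases a) auto
qed

lemma bisect_end_base: "hi \<le> Suc lo \<Longrightarrow> bisect_end st lo hi = (lo, hi)"
  by simp

lemma bisect_end_adjacent:
  "lo < hi \<Longrightarrow> \<exists>i. bisect_end st lo hi = (i, Suc i) \<and> lo \<le> i \<and> Suc i \<le> hi"
proof (induction st lo hi rule: bisect_end.induct)
  case (1 st lo hi)
  show ?case
  proof (cases "hi \<le> Suc lo")
    case True
    then show ?thesis using "1.prems" by auto
  next
    case long: False
    show ?thesis
    proof (cases "st lo hi")
      case True
      with "1.IH"(1)[OF long True] long show ?thesis by fastforce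
    next
      case False
      with "1.IH"(2)[OF long False] long show ?thesis by fastforce
    qed
  qed
qed

declare bisect_end.simps[simp del]

lemma path_game_won_if_all_steps_ok:
  assumes "pos = [] \<Longrightarrow> he = hr"
    and "\<And>i. Suc i \<le> length pos \<Longrightarrow> final_ok nodeH he hr pos cl sib (i, Suc i)"
  shows "path_game_won nodeH hr he pos cl sib"
  unfolding path_game_won_def
proof
  fix st
  show "final_ok nodeH he hr pos cl sib (bisect_end st 0 (length pos))"
  proof (cases "pos = []")
    case True
    then show ?thesis using assms(1) by (simp add: bisect_end_base final_ok_def)
  next
    case False
    then obtain i where "bisect_end st 0 (length pos) = (i, Suc i)" "Suc i \<le> length pos"
      using bisect_end_adjacent[of 0 "length pos" st] by auto
    with assms(2) show ?thesis by simp
  qed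
qed

definition merkle_path_claims ::
  "('tx \<Rightarrow> 'h) \<Rightarrow> ('h \<Rightarrow> 'h \<Rightarrow> 'h) \<Rightarrow> 'tx mtree \<Rightarrow> bool list \<Rightarrow> nat \<Rightarrow> 'h" where
  "merkle_path_claims leafH nodeH b pos i =
     mroot leafH nodeH (subtree b (take (length pos - i) pos))"

definition merkle_path_siblings ::
  "('tx \<Rightarrow> 'h) \<Rightarrow> ('h \<Rightarrow> 'h \<Rightarrow> 'h) \<Rightarrow> 'tx mtree \<Rightarrow> bool list \<Rightarrow> nat \<Rightarrow> 'h" where
  "merkle_path_siblings leafH nodeH b pos i =
     (let k = length pos - Suc i
      in mroot leafH nodeH (subtree b (take k pos @ [\<not> pos ! k])))"

lemma pathval_merkle_path_claims:
  assumes "leaf_at b pos = Some x" and "i \<le> length pos"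
  shows "pathval (leafH x) (mroot leafH nodeH b) (length pos)
           (merkle_path_claims leafH nodeH b pos) i = merkle_path_claims leafH nodeH b pos i"
  using assms subtree_leaf_at[OF assms(1)]
  by (auto simp: pathval_def merkle_path_claims_def)

lemma final_ok_merkle_path_step:
  assumes leaf: "leaf_at b pos = Some x" and i: "Suc i \<le> length pos"
  shows "final_ok nodeH (leafH x) (mroot leafH nodeH b) pos
           (merkle_path_claims leafH nodeH b pos) (merkle_path_siblings leafH nodeH b pos) (i, Suc i)"
proof -
  define k where "k = length pos - Suc i"
  have k: "k < length pos" "length pos - i = Suc k" using i by (auto simp: k_def)
  have "leaf_at b (take k pos @ pos ! k # drop (Suc k) pos) = Some x"
    using leaf k(1) by (simp add: id_take_nth_drop[symmetric])
  then have node: "subtree b (take k pos) =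
      MNode (subtree b (take k pos @ [False])) (subtree b (take k pos @ [True]))"
    by (rule subtree_prefix_of_leaf_path)
  have child: "take (Suc k) pos = take k pos @ [pos ! k]"
    using k(1) by (simp add: take_Suc_conv_app_nth)
  show ?thesis
    using node child k i
    unfolding final_ok_def Let_def split
    by (cases "pos ! k")
       (simp_all add: pathval_merkle_path_claims[OF leaf] merkle_path_claims_def
                      merkle_path_siblings_def k_def)
qed

lemma path_game_won_merkle_path:
  assumes "leaf_at b pos = Some x"
  shows "path_game_won nodeH (mroot leafH nodeH b) (leafH x) pos
           (merkle_path_claims leafH nodeH b pos) (merkle_path_siblings leafH nodeH b pos)"
proof (rule path_game_won_if_all_steps_ok)
  assume "pos = []"
  with assms have "b = MLeaf x" by (cases b) auto
  then show "leafH x = mroot leafH nodeH b" by simp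
qed (rule final_ok_merkle_path_step[OF assms])

lemma path_game_winnable:
  "leaf_at b pos = Some x \<Longrightarrow> \<exists>cl sib. path_game_won nodeH (mroot leafH nodeH b) (leafH x) pos cl sib"
  by (metis path_game_won_merkle_path)

theorem mainTheorem2:
  fixes verify :: "'p \<Rightarrow> 'bid \<times> 'h \<Rightarrow> 's \<Rightarrow> bool"
    and P :: "'p set" and f :: nat
    and valid :: "'tx \<Rightarrow> bool"
    and leafH :: "'tx \<Rightarrow> 'h" and nodeH :: "'h \<Rightarrow> 'h \<Rightarrow> 'h"
    and t :: "('bid, 'h, 'p, 's) tag" and b :: "'tx mtree"
    and confd :: "(('bid, 'h, 'p, 's) tag \<times> 'tx mtree) list"
  assumes knows_t: "mroot leafH nodeH b = root t"
    and knows_confirmed: "\<forall>(t', b') \<in> set confd. mroot leafH nodeH b' = root t'"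
    and not_confirmed: "t \<notin> fst ` set confd"
    and illegal: "\<not> legal verify P f valid t b confd"
  shows "can_prevent_confirmation verify P f valid leafH nodeH (map fst confd) t"
proof -
  note win = path_game_winnable[where leafH = leafH and nodeH = nodeH]
  consider "\<not> B1 verify P f t" | "\<not> B2 valid b" | "\<not> B3 b" | "\<not> B4 b confd"
    using illegal unfolding legal_def by blast
  then have "\<exists>c. challenge_wins verify P f valid leafH nodeH (map fst confd) t c"
  proof cases
    case 1
    then show ?thesis by (metis challenge_wins.simps(1))
  next
    case 2
    then obtain x p where "\<not> valid x" "leaf_at b p = Some x"
      by (auto simp: B2_def txs_def)
    with win[of b p x] knows_t show ?thesis by (metis challenge_wins.simps(2))
  next
    case 3
    then obtain p q x where "p \<noteq> q" "leaf_at b p = Some x" "leaf_at b q = Some x"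
      by (auto simp: B3_def)
    with win[of b p x] win[of b q x] knows_t show ?thesis by (metis challenge_wins.simps(3))
  next
    case 4
    then obtain x t' b' p q where "leaf_at b p = Some x" "(t', b') \<in> set confd"
        "leaf_at b' q = Some x"
      by (auto simp: B4_def txs_def)
    moreover from this have "t' \<in> set (map fst confd)" "mroot leafH nodeH b' = root t'"
      using knows_confirmed by force+
    ultimately show ?thesis
      using win[of b p x] win[of b' q x] knows_t by (metis challenge_wins.simps(4))
  qed
  then show ?thesis unfolding can_prevent_confirmation_def .
qed

end
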